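(* In the setting described in the context, for every $1\le i\le n/2$ and every $1\le j\le 2(n-1)$, $$\mathbb{E}[d_i(j)]\le 2\,\mathbb{E}[d_1(j)].$$
   Context: Let $n\ge4$ be even and let $d$ be a symmetric distance function satisfying the triangle inequality on the vertex set $\{1,\dots,n\}$ of the complete graph $G$. Let $s(v)=\sum_{u\ne v}d(u,v)$ and $\Delta=\sum_v s(v)$. A vertex minimizing $s$ is given the label $n$. Let $T'$ be a Hamiltonian cycle on the remaining $n-1$ vertices, with cyclic order $v_0,v_1,\dots,v_{n-2}$. Choose $\rho\in\{0,1,\dots,n-2\}$ uniformly at random and give vertex $v_{(p-1+\rho)\bmod (n-1)}$ the label $p$, for $p=1,\dots,n-1$; write $d(p,q)$ for the distance between the vertices labeled $p$ and $q$. All label arithmetic for labels in $\{1,\dots,n-1\}$ is modulo $n-1$, with representatives in $\{1,\dots,n-1\}$. Let $m=n/2$. For a "first-season day" $j\in\{1,\dots,n-1\}$ put $c_j\equiv m\,j \pmod{n-1}$; on that day the games (pairs of labels) are: game $1$ is $\{n,c_j\}$, and for $2\le i\le m$, game $i$ is $\{c_j+a_i,\,c_j-a_i\}$, where $a_i\in\{1,\dots,n-2\}$ is the unique element with $2a_i\equiv i-1\pmod{n-1}$ (so the two labels in game $i$ differ by $\pm(i-1)$ modulo $n-1$). The schedule has $2(n-1)$ days: days $1,\dots,n-1$ are the first-season days $1,\dots,n-1$, and days $n,n+1,\dots,2n-2$ repeat (with home venues reversed, irrelevant for distances) the games of first-season days $n-2,\,n-1,\,1,\,2,\dots,n-3$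 in this order. For $1\le i\le m$ and $1\le j\le 2(n-1)$, $d_i(j)$ denotes the distance between the two teams of game $i$ on day $j$. Expectations $\mathbb{E}$ are over the random $\rho$. *)

theory Defs
  imports Complex_Main "HOL-Number_Theory.Cong"
begin

definition svtx :: "nat \<Rightarrow> (nat \<Rightarrow> nat \<Rightarrow> real) \<Rightarrow> nat \<Rightarrow> real" where
  "svtx n d v = (\<Sum>u\<in>{1..n} - {v}. d u v)"

definition lrep :: "nat \<Rightarrow> int \<Rightarrow> int" where
  "lrep n x = (x - 1) mod (int n - 1) + 1"

text \<open>Vertex carrying label p (p in 1..n), for rotation rho; the cycle T' is
  cyc 0, ..., cyc (n-2), and vn is the vertex labeled n.\<close>
definition vlab :: "nat \<Rightarrow> nat \<Rightarrow> (nat \<Rightarrow> nat) \<Rightarrow> nat \<Rightarrow> int \<Rightarrow> nat" where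
  "vlab n vn cyc \<rho> p =
     (if p = int n then vn else cyc (nat ((p - 1 + int \<rho>) mod (int n - 1))))"

definition cday :: "nat \<Rightarrow> nat \<Rightarrow> int" where
  "cday n j = lrep n (int (n div 2) * int j)"

definition agame :: "nat \<Rightarrow> nat \<Rightarrow> int" where
  "agame n i = (THE a. a \<in> {1..int n - 2} \<and> [2 * a = int i - 1] (mod (int n - 1)))"

text \<open>The two labels of game i on first-season day j.\<close>
definition game :: "nat \<Rightarrow> nat \<Rightarrow> nat \<Rightarrow> int \<times> int" where
  "game n j i = (if i = 1 then (int n, cday n j)
                 else (lrep n (cday n j + agame n i), lrep n (cday n j - agame n i)))"

text \<open>First-season day whose games are played on schedule day j (1 \<le> j \<le> 2(n-1)).\<close>
definition fsday :: "nat \<Rightarrow> nat \<Rightarrow> nat" where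
  "fsday n j = (if j \<le> n - 1 then j
                else if j = n then n - 2
                else if j = n + 1 then n - 1
                else j - n - 1)"

definition dgame :: "nat \<Rightarrow> (nat \<Rightarrow> nat \<Rightarrow> real) \<Rightarrow> nat \<Rightarrow> (nat \<Rightarrow> nat) \<Rightarrow> nat \<Rightarrow> nat \<Rightarrow> nat \<Rightarrow> real" where
  "dgame n d vn cyc \<rho> i j =
     (let (p, q) = game n (fsday n j) i in d (vlab n vn cyc \<rho> p) (vlab n vn cyc \<rho> q))"

text \<open>Expectation over rho uniform in {0..n-2}.\<close>
definition Edgame :: "nat \<Rightarrow> (nat \<Rightarrow> nat \<Rightarrow> real) \<Rightarrow> nat \<Rightarrow> (nat \<Rightarrow> nat) \<Rightarrow> nat \<Rightarrow> nat \<Rightarrow> real" where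
  "Edgame n d vn cyc i j = (\<Sum>\<rho><n - 1. dgame n d vn cyc \<rho> i j) / real (n - 1)"

end

theory Submission
  imports Defs
begin

text \<open>Every game other than game 1 can be routed through the vertex labelled \<open>n\<close> by the
  triangle inequality, so \<open>d_i(j) \<le> d(p, n) + d(n, q)\<close> for its labels \<open>p, q \<noteq> n\<close>.
  Since \<open>\<rho>\<close> is a uniform rotation of the cycle, the vertex carrying a fixed label \<open>p \<noteq> n\<close>
  is uniform on the cycle, so \<open>E[d(p, n)]\<close> does not depend on \<open>p\<close>; in particular it equals
  \<open>E[d_1(j)]\<close>, game 1 being \<open>{n, c_j}\<close>.\<close>

lemma sum_rotate_mod:
  fixes f :: "nat \<Rightarrow> 'a::comm_monoid_add" and x :: int
  assumes "m \<ge> 1"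
  shows "(\<Sum>\<rho><m. f (nat ((x + int \<rho>) mod int m))) = (\<Sum>k<m. f k)"
proof -
  let ?g = "\<lambda>\<rho>::nat. nat ((x + int \<rho>) mod int m)"
  have inj: "inj_on ?g {..<m}"
  proof (rule inj_onI)
    fix a b assume a: "a \<in> {..<m}" and b: "b \<in> {..<m}" and "?g a = ?g b"
    then have "[x + int a = x + int b] (mod int m)"
      using assms by (simp add: cong_def nat_eq_iff2)
    then have "[int a = int b] (mod int m)" by (metis add.commute cong_add_rcancel)
    then show "a = b" using a b by (simp add: cong_def)
  qed
  have "?g ` {..<m} \<subseteq> {..<m}"
    using assms by (auto simp: nat_less_iff)
  then have "?g ` {..<m} = {..<m}"
    using inj by (intro card_subset_eq) (auto simp: card_image)
  then show ?thesis
    using sum.reindex[OF inj, of f] by simp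
qed

lemma lrep_ne_n:
  assumes "n \<ge> 2"
  shows "lrep n x \<noteq> int n"
proof -
  have "(x - 1) mod (int n - 1) < int n - 1"
    using assms by (intro pos_mod_bound) simp
  then show ?thesis unfolding lrep_def by linarith
qed

lemma game_labels_ne_n:
  assumes "n \<ge> 2" and "i \<noteq> 1" and "game n j i = (p, q)"
  shows "p \<noteq> int n" and "q \<noteq> int n"
  using assms lrep_ne_n unfolding game_def by auto

lemma dgame_first:
  "dgame n d vn cyc \<rho> 1 j = d vn (vlab n vn cyc \<rho> (cday n (fsday n j)))"
  by (simp add: dgame_def game_def vlab_def)

lemma vlab_mem:
  assumes "n \<ge> 2" and "vn \<in> {1..n}" and "cyc ` {0..<n - 1} \<subseteq> {1..n}"
  shows "vlab n vn cyc \<rho> p \<in> {1..n}"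
proof -
  have "nat ((p - 1 + int \<rho>) mod (int n - 1)) \<in> {0..<n - 1}"
    using assms(1) by (simp add: nat_less_iff of_nat_diff)
  then have "cyc (nat ((p - 1 + int \<rho>) mod (int n - 1))) \<in> {1..n}"
    using assms(3) by blast
  then show ?thesis
    using assms(2) unfolding vlab_def by simp
qed

lemma sum_vlab_rotation:
  fixes f :: "nat \<Rightarrow> 'a::comm_monoid_add"
  assumes "n \<ge> 2" and "p \<noteq> int n"
  shows "(\<Sum>\<rho><n - 1. f (vlab n vn cyc \<rho> p)) = (\<Sum>k<n - 1. f (cyc k))"
proof -
  have "int (n - 1) = int n - 1" using assms(1) by simp
  then have "(\<Sum>\<rho><n - 1. f (vlab n vn cyc \<rho> p))
      = (\<Sum>\<rho><n - 1. (\<lambda>k. f (cyc k)) (nat ((p - 1 + int \<rho>) mod int (n - 1))))"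
    using assms(2) by (simp add: vlab_def)
  also have "\<dots> = (\<Sum>k<n - 1. f (cyc k))"
    using assms(1) by (intro sum_rotate_mod) simp
  finally show ?thesis .
qed

lemma sum_dgame_le_twice_first:
  fixes d :: "nat \<Rightarrow> nat \<Rightarrow> real"
  assumes n2: "n \<ge> 2" and vn: "vn \<in> {1..n}" and cyc: "cyc ` {0..<n - 1} \<subseteq> {1..n}"
    and sym: "\<And>u v. u \<in> {1..n} \<Longrightarrow> v \<in> {1..n} \<Longrightarrow> d u v = d v u"
    and tri: "\<And>u v w. u \<in> {1..n} \<Longrightarrow> v \<in> {1..n} \<Longrightarrow> w \<in> {1..n} \<Longrightarrow> d u w \<le> d u v + d v w"
    and "i \<noteq> 1"
  shows "(\<Sum>\<rho><n - 1. dgame n d vn cyc \<rho> i j) \<le> 2 * (\<Sum>\<rho><n - 1. dgame n d vn cyc \<rho> 1 j)"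
proof -
  note vlab = vlab_mem[OF n2 vn cyc]
  define S where "S = (\<Sum>k<n - 1. d vn (cyc k))"
  have sum_to_label: "(\<Sum>\<rho><n - 1. d vn (vlab n vn cyc \<rho> p)) = S" if "p \<noteq> int n" for p
    unfolding S_def by (rule sum_vlab_rotation[OF n2 that])
  obtain p q where pq: "game n (fsday n j) i = (p, q)" by fastforce
  have "dgame n d vn cyc \<rho> i j \<le> d vn (vlab n vn cyc \<rho> p) + d vn (vlab n vn cyc \<rho> q)" for \<rho>
    using tri[OF vlab vn vlab, of \<rho> p \<rho> q] sym[OF vn vlab, of \<rho> p]
    by (simp add: dgame_def pq)
  then have "(\<Sum>\<rho><n - 1. dgame n d vn cyc \<rho> i j)
      \<le> (\<Sum>\<rho><n - 1. d vn (vlab n vn cyc \<rho> p)) + (\<Sum>\<rho><n - 1. d vn (vlab n vn cyc \<rho> q))"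
    by (simp add: sum_mono flip: sum.distrib)
  also have "\<dots> = 2 * S"
    using sum_to_label game_labels_ne_n[OF n2 \<open>i \<noteq> 1\<close> pq] by simp
  also have "S = (\<Sum>\<rho><n - 1. dgame n d vn cyc \<rho> 1 j)"
    unfolding dgame_first by (rule sum_to_label[symmetric]) (simp add: cday_def lrep_ne_n[OF n2])
  finally show ?thesis .
qed

theorem lemma8:
  fixes n :: nat and d :: "nat \<Rightarrow> nat \<Rightarrow> real" and vn :: nat and cyc :: "nat \<Rightarrow> nat"
  assumes "n \<ge> 4" and "even n"
    and nonneg: "\<And>u v. u \<in> {1..n} \<Longrightarrow> v \<in> {1..n} \<Longrightarrow> 0 \<le> d u v"
    and sym: "\<And>u v. u \<in> {1..n} \<Longrightarrow> v \<in> {1..n} \<Longrightarrow> d u v = d v u"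
    and tri: "\<And>u v w. u \<in> {1..n} \<Longrightarrow> v \<in> {1..n} \<Longrightarrow> w \<in> {1..n} \<Longrightarrow> d u w \<le> d u v + d v w"
    and vn: "vn \<in> {1..n}" and vnmin: "\<And>v. v \<in> {1..n} \<Longrightarrow> svtx n d vn \<le> svtx n d v"
    and cyc: "bij_betw cyc {0..<n - 1} ({1..n} - {vn})"
    and i: "1 \<le> i" "i \<le> n div 2"
    and j: "1 \<le> j" "j \<le> 2 * (n - 1)"
  shows "Edgame n d vn cyc i j \<le> 2 * Edgame n d vn cyc 1 j"
proof -
  have n2: "n \<ge> 2" using assms(1) by simp
  have cyc_mem: "cyc ` {0..<n - 1} \<subseteq> {1..n}" using cyc by (auto simp: bij_betw_def)
  have first_nonneg: "0 \<le> (\<Sum>\<rho><n - 1. dgame n d vn cyc \<rho> 1 j)"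
    unfolding dgame_first using nonneg[OF vn vlab_mem[OF n2 vn cyc_mem]] by (simp add: sum_nonneg)
  have "(\<Sum>\<rho><n - 1. dgame n d vn cyc \<rho> i j) \<le> 2 * (\<Sum>\<rho><n - 1. dgame n d vn cyc \<rho> 1 j)"
  proof (cases "i = 1")
    case True
    then show ?thesis using first_nonneg by simp
  next
    case False
    from sum_dgame_le_twice_first[OF n2 vn cyc_mem sym tri False] show ?thesis .
  qed
  moreover have "real (n - 1) > 0" using n2 by simp
  ultimately show ?thesis
    unfolding Edgame_def by (simp add: divide_right_mono)
qed

end
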